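(* Let $K,L,N$ be positive integers and $t$, $n\ge 2$ integers with $K=nt+(n-1)L$ and $L\ge t$, and consider a $(K,L,M,N)$ multi-antenna coded caching system with $\frac{M}{N}=\frac{t}{K}$. Then the delivery time $$T^*=\frac{K-t}{t+L}=n-1$$ is achievable by a scheme with subpacketization number $\frac{K}{\gcd(K,t,L)}$.
   Context: $(K,L,M,N)$ multi-antenna coded caching system: a server holds $N$ files $W_1,\dots,W_N$, each of size one unit, and has $L$ transmit antennas; it serves $K$ single-antenna users over a MISO broadcast channel of capacity one file per unit time. User $k$ has a cache of size $M$ units ($0\le M\le N$). In the placement phase (before demands are known) the server fills caches with uncoded file content. In the delivery phase each user $k$ requests a file $W_{d_k}$; the server sends vectors $\mathbf{x}(\tau)\in\mathbb{C}^L$ and user $k$ receives $y_k(\tau)=\mathbf{h}_k^T\mathbf{x}(\tau)+w_k(\tau)$ with $\mathbf{h}_k\in\mathbb{C}^L$ its channel vector; all nodes have perfect channel knowledge, the channel vectors are generic, and the high-SNR regime is considered (noise neglected). A scheme is correct if every user recovers its requested file from its cache and received signals, for every demand vector. The subpacketization number is the number of equal-size subfiles into which each file is split; if each file is split into $F$ subfiles and the delivery consists of $S'$ transmissions each of size $1/F$ file, the delivery time is $T=S'/F$. "Achievable" means such a correct scheme exists for every demand vector with that delivery time. *)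

theory Defs
  imports "HOL-Analysis.Analysis"
begin

text \<open>Multi-antenna coded caching (high-SNR, noiseless, linear model).
  Files are indexed by j < N, each file is split into F subfiles g < F; the
  content of subfile (j,g) of a library W is the complex symbol W j g.
  Users are the elements of a finite type 'k (K = CARD('k)); antennas are the
  elements of a finite type 'l (L = CARD('l)).\<close>

definition tx :: "nat \<Rightarrow> nat \<Rightarrow> (nat \<Rightarrow> nat \<Rightarrow> complex^'l) \<Rightarrow> (nat \<Rightarrow> nat \<Rightarrow> complex) \<Rightarrow> complex^'l"
  where "tx N F V W = (\<chi> i. \<Sum>j<N. \<Sum>g<F. W j g * (V j g $ i))"

definition rx :: "complex^'l \<Rightarrow> complex^'l \<Rightarrow> complex"
  where "rx h x = (\<Sum>i\<in>UNIV. h $ i * x $ i)"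

text \<open>Uncoded placement: every user caches whole subfiles, at most M units
  (i.e. M*F subfiles of size 1/F).\<close>
definition uncoded_placement :: "nat \<Rightarrow> nat \<Rightarrow> real \<Rightarrow> ('k \<Rightarrow> (nat \<times> nat) set) \<Rightarrow> bool"
  where "uncoded_placement N F M Z \<longleftrightarrow>
    (\<forall>k. Z k \<subseteq> {..<N} \<times> {..<F} \<and> real (card (Z k)) \<le> M * real F)"

text \<open>Correct delivery with S transmissions (precoders V tau j g) for channels h
  and demand vector d: every user k can recover (i.e. is uniquely determined)
  its requested file from its cache content and its received signals.\<close>
definition correct_delivery ::
  "nat \<Rightarrow> nat \<Rightarrow> nat \<Rightarrow> ('k \<Rightarrow> (nat \<times> nat) set) \<Rightarrow> complex^'l^'k \<Rightarrow> ('k \<Rightarrow> nat)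
     \<Rightarrow> (nat \<Rightarrow> nat \<Rightarrow> nat \<Rightarrow> complex^'l) \<Rightarrow> bool"
  where "correct_delivery N F S Z h d V \<longleftrightarrow>
    (\<forall>k. \<forall>W W'. (\<forall>(j,g)\<in>Z k. W j g = W' j g) \<and>
        (\<forall>\<tau><S. rx (h $ k) (tx N F (V \<tau>) W) = rx (h $ k) (tx N F (V \<tau>) W'))
      \<longrightarrow> (\<forall>g<F. W (d k) g = W' (d k) g))"

end

theory Submission
  imports Defs
begin

text \<open>Divide K, t and L by g = gcd K t L, so that K' = (n - 1)(t' + L') + t', and split the users
  into K' groups of g users. Group G caches, of every file, the t' subfiles f with
  (G - f) mod K' < t', which meets the memory constraint M/N = t'/K'. Each of the (n - 1) K'
  transmissions serves a front block of t' consecutive groups and a back block of L' consecutive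
  groups with one uncached subfile each; the back blocks of the n - 1 rounds are staggered by
  t' + L', so that every pair of a group and a subfile it misses is served in some transmission.
  A served user is interfered with only by the at most g L' = L served users that lack its
  subfile, so if every L rows of the channel matrix are linearly independent, zero-forcing
  precoders remove all interference and each user reads off its missing subfiles one by one.
  The exceptional channels form a null set: they are covered by finitely many images of
  hyperplanes under polynomial self-maps of the channel space.\<close>

section \<open>Generic channel matrices\<close>

lemma bounded_linear_axis: "bounded_linear (axis i :: 'b::euclidean_space \<Rightarrow> 'b^'n)"
  unfolding linear_conv_bounded_linear[symmetric]
  by (rule linearI) (auto simp: vec_eq_iff axis_def)

lemma differentiable_vec_lambda:
  fixes f :: "'a::real_normed_vector \<Rightarrow> 'b::euclidean_space^'n"
  assumes "\<And>i. (\<lambda>x. f x $ i) differentiable F"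
  shows "f differentiable F"
proof -
  have "(\<lambda>x. axis i (f x $ i)) differentiable F" for i
    using assms[of i] bounded_linear.has_derivative[OF bounded_linear_axis]
    unfolding differentiable_def by blast
  then have "(\<lambda>x. \<Sum>i\<in>UNIV. axis i (f x $ i)) differentiable F"
    by (intro differentiable_sum) auto
  moreover have "(\<Sum>i\<in>UNIV. axis i (v $ i)) = v" for v :: "'b^'n"
    by (simp add: vec_eq_iff sum_component axis_def)
  ultimately show ?thesis
    by simp
qed

definition generic_channel :: "complex^'l^'k \<Rightarrow> bool" where
  "generic_channel h \<longleftrightarrow> (\<forall>\<beta>::'l \<Rightarrow> 'k. inj \<beta> \<longrightarrow>
     (\<forall>c. (\<Sum>i\<in>UNIV. c i *s h $ \<beta> i) = 0 \<longrightarrow> (\<forall>i. c i = 0)))"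

text \<open>A dependency among the rows \<open>\<beta> i\<close> of \<open>h\<close> that involves the row \<open>\<beta> i0\<close> expresses that row
  through the others. The coefficients can be stored in the row \<open>\<beta> i0\<close> itself, at the places
  \<open>i \<noteq> i0\<close>, so \<open>h\<close> is the image under \<open>replace_row \<beta> i0\<close> of a point of the hyperplane
  \<open>x $ \<beta> i0 $ i0 = 0\<close>.\<close>

definition replace_row :: "('l \<Rightarrow> 'k) \<Rightarrow> 'l \<Rightarrow> complex^'l^'k \<Rightarrow> complex^'l^'k" where
  "replace_row \<beta> i0 x =
     (\<chi> k. if k = \<beta> i0 then (\<Sum>i\<in>UNIV - {i0}. x $ \<beta> i0 $ i *s x $ \<beta> i) else x $ k)"

lemma differentiable_replace_row:
  fixes \<beta> :: "'l::finite \<Rightarrow> 'k::finite"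
  shows "replace_row \<beta> i0 differentiable at x"
proof -
  have entry: "(\<lambda>y::complex^'l^'k. y $ k $ l) differentiable at x" for k l
    by (rule bounded_linear_imp_differentiable)
       (rule bounded_linear_compose[OF bounded_linear_vec_nth bounded_linear_vec_nth])
  have "(\<lambda>x. replace_row \<beta> i0 x $ k $ l) differentiable at x" for k l
  proof (cases "k = \<beta> i0")
    case True
    then show ?thesis
      by (simp add: replace_row_def) (intro differentiable_sum ballI differentiable_mult entry; simp)
  qed (simp add: replace_row_def entry)
  then show ?thesis
    by (intro differentiable_vec_lambda)
qed

lemma not_generic_channel_in_replace_row_image:
  fixes h :: "complex^'l::finite^'k::finite"
  assumes "\<not> generic_channel h"
  obtains \<beta> i0 where "inj \<beta>" "h \<in> replace_row \<beta> i0 ` {x. x $ \<beta> i0 $ i0 = 0}"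
proof -
  obtain \<beta> :: "'l \<Rightarrow> 'k" and c i0 where inj: "inj \<beta>"
    and dep: "(\<Sum>i\<in>UNIV. c i *s h $ \<beta> i) = 0" and ci0: "c i0 \<noteq> 0"
    using assms unfolding generic_channel_def by blast
  define x where "x = (\<chi> k. if k = \<beta> i0 then (\<chi> i. if i = i0 then 0 else - c i / c i0) else h $ k)"
  have "c i0 *s h $ \<beta> i0 + (\<Sum>i\<in>UNIV - {i0}. c i *s h $ \<beta> i) = 0"
    using dep by (simp add: sum.remove[of UNIV i0])
  then have "h $ \<beta> i0 = (\<Sum>i\<in>UNIV - {i0}. (- c i / c i0) *s h $ \<beta> i)"
    using ci0 by (auto simp: vec_eq_iff add_eq_0_iff sum_negf field_simps simp flip: sum_divide_distrib)
  moreover have "x $ \<beta> i = h $ \<beta> i" if "i \<noteq> i0" for i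
    using that inj by (auto simp: x_def inj_eq)
  ultimately have "replace_row \<beta> i0 x = h"
    by (auto simp: replace_row_def vec_eq_iff x_def intro!: sum.cong)
  moreover have "x $ \<beta> i0 $ i0 = 0"
    by (simp add: x_def)
  ultimately show thesis
    using that inj by blast
qed

lemma AE_generic_channel:
  "AE h in (lborel :: (complex^'l::finite^'k::finite) measure). generic_channel h"
proof -
  define bad where
    "bad = (\<Union>\<beta>\<in>{\<beta>::'l \<Rightarrow> 'k. inj \<beta>}. \<Union>i0. replace_row \<beta> i0 ` {x. x $ \<beta> i0 $ i0 = 0})"
  have "negligible {x::complex^'l^'k. x $ k $ i = 0}" for k i
  proof (rule negligible_subset[OF negligible_hyperplane])
    show "axis k (axis i (1::complex)) \<noteq> 0 \<or> (0::real) \<noteq> 0"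
      by (auto simp: vec_eq_iff axis_def)
  qed (auto simp: inner_axis')
  then have "negligible (replace_row \<beta> i0 ` {x. x $ \<beta> i0 $ i0 = 0})" for \<beta> :: "'l \<Rightarrow> 'k" and i0
    by (intro negligible_differentiable_image_negligible differentiable_at_imp_differentiable_on
        differentiable_replace_row) simp_all
  then have "bad \<in> null_sets lebesgue"
    unfolding bad_def negligible_iff_null_sets[symmetric]
    by (intro negligible_Union finite_imageI finite_UNIV finite_UN_I) auto
  moreover have "{h \<in> space lebesgue. \<not> generic_channel h} \<subseteq> bad"
  proof
    fix h :: "complex^'l^'k"
    assume "h \<in> {h \<in> space lebesgue. \<not> generic_channel h}"
    then obtain \<beta> i0 where "inj \<beta>" "h \<in> replace_row \<beta> i0 ` {x. x $ \<beta> i0 $ i0 = 0}"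
      using not_generic_channel_in_replace_row_image by blast
    then show "h \<in> bad"
      unfolding bad_def by blast
  qed
  ultimately have "AE h in (lebesgue :: (complex^'l^'k) measure). generic_channel h"
    by (rule AE_I')
  then show ?thesis
    by (simp add: AE_completion_iff)
qed

section \<open>Linear delivery with zero-forcing precoders\<close>

lemma rx_eq_matrix_vector_mult: "rx (h $ \<beta> i) w = ((\<chi> i. h $ \<beta> i) *v w) $ i"
  by (simp add: rx_def matrix_vector_mult_def)

lemma zero_forcing_precoder:
  fixes h :: "complex^'l::finite^'k::finite"
  assumes "generic_channel h" and "CARD('l) \<le> CARD('k)" and "card B \<le> CARD('l)" and "v \<in> B"
  obtains w where "rx (h $ v) w = 1" and "\<And>x. x \<in> B - {v} \<Longrightarrow> rx (h $ x) w = 0"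
proof -
  have "CARD('l) - card B \<le> card (UNIV - B)"
    using assms(2) by (simp add: card_Diff_subset)
  then obtain T where T: "T \<subseteq> UNIV - B" "card T = CARD('l) - card B"
    by (meson obtain_subset_with_card_n)
  then have "card (B \<union> T) = CARD('l)"
    using assms(3) by (subst card_Un_disjoint) auto
  then obtain \<beta> :: "'l \<Rightarrow> 'k" where \<beta>: "bij_betw \<beta> UNIV (B \<union> T)"
    using finite_same_card_bij[of "UNIV::'l set" "B \<union> T"] by auto
  define A where "A = (\<chi> i. h $ \<beta> i)"
  have "\<forall>c. (\<Sum>i\<in>UNIV. c i *s row i A) = 0 \<longrightarrow> (\<forall>i. c i = 0)"
    using assms(1) bij_betw_imp_inj_on[OF \<beta>] unfolding generic_channel_def A_def
    by (simp add: row_def)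
  then obtain R where R: "A ** R = mat 1"
    using matrix_right_invertible_independent_rows by blast
  have preimage: "\<exists>i. \<beta> i = x" if "x \<in> B" for x
    using \<beta> that unfolding bij_betw_def by (metis UnI1 rangeE)
  then obtain iv where iv: "\<beta> iv = v"
    using assms(4) by blast
  define w where "w = R *v axis iv 1"
  have rx_w: "rx (h $ \<beta> i) w = axis iv 1 $ i" for i
    by (simp add: rx_eq_matrix_vector_mult flip: A_def) (simp add: w_def matrix_vector_mul_assoc R)
  show thesis
  proof (rule that)
    show "rx (h $ v) w = 1"
      using rx_w[of iv] iv by simp
    show "rx (h $ x) w = 0" if "x \<in> B - {v}" for x
      using that preimage[of x] rx_w iv by (auto simp: axis_def)
  qed
qed

lemma rx_sum: "rx hk (\<Sum>u\<in>A. w u) = (\<Sum>u\<in>A. rx hk (w u))"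
  unfolding rx_def by (simp add: sum_distrib_left sum.swap[of _ UNIV])

lemma rx_tx: "rx hk (tx N F V W) = (\<Sum>j<N. \<Sum>g<F. W j g * rx hk (V j g))"
  unfolding rx_def tx_def
  by (simp add: sum_distrib_left sum_distrib_right mult_ac sum.swap[of _ UNIV])

lemma decode_by_unit_coefficient:
  assumes "rx hk (tx N F V W) = rx hk (tx N F V W')" and "j0 < N" and "g0 < F" and "(j0, g0) \<notin> C"
    and "\<And>j g. (j, g) \<in> C \<Longrightarrow> W j g = W' j g"
    and "\<And>j g. j < N \<Longrightarrow> g < F \<Longrightarrow> (j, g) \<notin> C \<Longrightarrow>
      rx hk (V j g) = (if (j, g) = (j0, g0) then 1 else 0)"
  shows "W j0 g0 = W' j0 g0"
proof -
  have term_eq: "W j g * rx hk (V j g) - W' j g * rx hk (V j g)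
      = (if j = j0 then if g = g0 then W j g - W' j g else 0 else 0)" if "j < N" "g < F" for j g
    using assms(5,6)[of j g] that by (cases "(j, g) \<in> C") auto
  have "0 = rx hk (tx N F V W) - rx hk (tx N F V W')"
    using assms(1) by simp
  also have "\<dots> = (\<Sum>j<N. \<Sum>g<F. W j g * rx hk (V j g) - W' j g * rx hk (V j g))"
    by (simp add: rx_tx sum_subtractf)
  also have "\<dots> = (\<Sum>j<N. if j = j0 then \<Sum>g<F. if g = g0 then W j g - W' j g else 0 else 0)"
    by (intro sum.cong refl) (simp add: term_eq)
  also have "\<dots> = W j0 g0 - W' j0 g0"
    using assms(2,3) by simp
  finally show ?thesis
    by simp
qed

lemma correct_delivery_if_unit_coefficients:
  assumes "\<forall>k. d k < N"
    and "\<And>k g. g < F \<Longrightarrow> (d k, g) \<notin> Z k \<Longrightarrow> \<exists>\<tau><S. \<forall>j g'. j < N \<longrightarrow> g' < F \<longrightarrow>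
      (j, g') \<notin> Z k \<longrightarrow> rx (h $ k) (V \<tau> j g') = (if (j, g') = (d k, g) then 1 else 0)"
  shows "correct_delivery N F S Z h d V"
  unfolding correct_delivery_def
proof (intro allI impI)
  fix k W W' g
  assume agree: "(\<forall>(j, g) \<in> Z k. W j g = W' j g) \<and>
      (\<forall>\<tau><S. rx (h $ k) (tx N F (V \<tau>) W) = rx (h $ k) (tx N F (V \<tau>) W'))"
    and "g < F"
  have cached: "W j g' = W' j g'" if "(j, g') \<in> Z k" for j g'
    using agree that by blast
  show "W (d k) g = W' (d k) g"
  proof (cases "(d k, g) \<in> Z k")
    case False
    with assms(2) \<open>g < F\<close> obtain \<tau> where "\<tau> < S" and unit: "\<forall>j g'. j < N \<longrightarrow> g' < F \<longrightarrow>
        (j, g') \<notin> Z k \<longrightarrow> rx (h $ k) (V \<tau> j g') = (if (j, g') = (d k, g) then 1 else 0)"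
      by blast
    show ?thesis
    proof (rule decode_by_unit_coefficient[where C = "Z k"])
      show "rx (h $ k) (tx N F (V \<tau>) W) = rx (h $ k) (tx N F (V \<tau>) W')"
        using agree \<open>\<tau> < S\<close> by blast
    qed (use assms(1) \<open>g < F\<close> False cached unit in auto)
  qed (rule cached)
qed

lemma zero_forcing_delivery:
  fixes h :: "complex^'l::finite^'k::finite"
    and served :: "nat \<Rightarrow> 'k set" and sub :: "nat \<Rightarrow> 'k \<Rightarrow> nat"
  assumes "generic_channel h" and "CARD('l) \<le> CARD('k)" and "\<forall>k. d k < N"
    and served_uncached: "\<And>\<tau> u. \<tau> < S \<Longrightarrow> u \<in> served \<tau> \<Longrightarrow> (d u, sub \<tau> u) \<notin> Z u"
    and interference: "\<And>\<tau> u. \<tau> < S \<Longrightarrow> u \<in> served \<tau> \<Longrightarrow>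
        card {x \<in> served \<tau>. (d u, sub \<tau> u) \<notin> Z x} \<le> CARD('l)"
    and covered: "\<And>k g. g < F \<Longrightarrow> (d k, g) \<notin> Z k \<Longrightarrow> \<exists>\<tau><S. k \<in> served \<tau> \<and> sub \<tau> k = g"
  shows "\<exists>V. correct_delivery N F S Z h d V"
proof -
  define interferers where "interferers \<tau> u = {x \<in> served \<tau>. (d u, sub \<tau> u) \<notin> Z x}" for \<tau> u
  have precoder_exists:
    "\<exists>w. rx (h $ u) w = 1 \<and> (\<forall>x \<in> interferers \<tau> u - {u}. rx (h $ x) w = 0)"
    if "\<tau> < S" "u \<in> served \<tau>" for \<tau> u
  proof -
    have "card (interferers \<tau> u) \<le> CARD('l)" and "u \<in> interferers \<tau> u"
      using interference[OF that] served_uncached[OF that] that(2)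
      by (simp_all add: interferers_def)
    then show ?thesis
      by (metis zero_forcing_precoder[OF assms(1,2)])
  qed
  define w where
    "w \<tau> u = (SOME w. rx (h $ u) w = 1 \<and> (\<forall>x \<in> interferers \<tau> u - {u}. rx (h $ x) w = 0))"
    for \<tau> u
  have w: "rx (h $ u) (w \<tau> u) = 1 \<and> (\<forall>x \<in> interferers \<tau> u - {u}. rx (h $ x) (w \<tau> u) = 0)"
    if "\<tau> < S" "u \<in> served \<tau>" for \<tau> u
    unfolding w_def by (rule someI_ex[OF precoder_exists[OF that]])
  define V where "V \<tau> j g = (\<Sum>u \<in> {u \<in> served \<tau>. d u = j \<and> sub \<tau> u = g}. w \<tau> u)" for \<tau> j g
  have coefficient: "rx (h $ k) (V \<tau> j g) = (if (j, g) = (d k, sub \<tau> k) then 1 else 0)"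
    if "\<tau> < S" "k \<in> served \<tau>" "(j, g) \<notin> Z k" for \<tau> k j g
  proof -
    have "rx (h $ k) (V \<tau> j g)
        = (\<Sum>u \<in> {u \<in> served \<tau>. d u = j \<and> sub \<tau> u = g}. if u = k then 1 else 0)"
      unfolding V_def rx_sum
    proof (rule sum.cong)
      fix u assume "u \<in> {u \<in> served \<tau>. d u = j \<and> sub \<tau> u = g}"
      then show "rx (h $ k) (w \<tau> u) = (if u = k then 1 else 0)"
        using w[of \<tau> u] that by (auto simp: interferers_def)
    qed simp
    also have "\<dots> = (if (j, g) = (d k, sub \<tau> k) then 1 else 0)"
      using that(2) by (auto simp: sum.delta)
    finally show ?thesis .
  qed
  have "correct_delivery N F S Z h d V"
  proof (rule correct_delivery_if_unit_coefficients[OF assms(3)])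
    fix k g assume "g < F" "(d k, g) \<notin> Z k"
    with covered obtain \<tau> where "\<tau> < S" "k \<in> served \<tau>" "sub \<tau> k = g"
      by blast
    then show "\<exists>\<tau><S. \<forall>j g'. j < N \<longrightarrow> g' < F \<longrightarrow>
        (j, g') \<notin> Z k \<longrightarrow> rx (h $ k) (V \<tau> j g') = (if (j, g') = (d k, g) then 1 else 0)"
      using coefficient by blast
  qed
  then show ?thesis
    by blast
qed

section \<open>A cyclic placement and delivery design\<close>

lemma card_preimage_bij_betw:
  assumes "bij_betw f A B" and "I \<subseteq> B"
  shows "card {x \<in> A. f x \<in> I} = card I"
proof -
  have "f ` {x \<in> A. f x \<in> I} = I"
    using assms(2) bij_betw_imp_surj_on[OF assms(1)] by (auto simp: image_iff)
  then have "bij_betw f {x \<in> A. f x \<in> I} I"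
    by (intro bij_betw_subset[OF assms(1)]) auto
  then show ?thesis
    by (rule bij_betw_same_card)
qed

lemma card_preimage_fst_bij_betw:
  assumes "bij_betw e UNIV (B \<times> C)" and "A \<subseteq> B"
  shows "card {u. fst (e u) \<in> A} = card A * card C"
proof -
  have "snd (e u) \<in> C" for u
    using bij_betw_apply[OF assms(1)] by (simp add: mem_Times_iff)
  then have "{u. fst (e u) \<in> A} = {u \<in> UNIV. e u \<in> A \<times> C}"
    by (simp add: mem_Times_iff)
  also have "card \<dots> = card (A \<times> C)"
    using assms(2) by (intro card_preimage_bij_betw[OF assms(1)]) auto
  finally show ?thesis
    by (simp add: card_cartesian_product)
qed

lemma bij_betw_mod_shift:
  assumes "0 < K"
  shows "bij_betw (\<lambda>x. (int x - p) mod int K) {..<K} {0..<int K}"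
  by (rule bij_betw_byWitness[where f' = "\<lambda>y. nat ((y + p) mod int K)"])
     (use assms in \<open>auto simp: mod_simps nat_less_iff\<close>)

lemma bij_betw_mod_reflect:
  assumes "0 < K"
  shows "bij_betw (\<lambda>x. (p - int x) mod int K) {..<K} {0..<int K}"
  by (rule bij_betw_byWitness[where f' = "\<lambda>y. nat ((p - y) mod int K)"])
     (use assms in \<open>auto simp: mod_simps nat_less_iff\<close>)

text \<open>The parameters are the reduced ones, \<open>t = t'\<close> and \<open>L = L'\<close>. Groups and subfiles are both
  numbered by residues modulo \<open>K\<close>. Transmission \<open>(r, a)\<close>, numbered \<open>r K + a\<close>, of round \<open>r < n - 1\<close>, serves the front
  block of the \<open>t\<close> groups starting at \<open>a\<close> with subfile \<open>a + back_start r\<close> and the back block of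
  the \<open>L\<close> groups starting at \<open>a + back_start r\<close> with subfile \<open>a\<close>; \<open>lag r a G\<close> is how far a served
  group \<open>G\<close> lies ahead of the subfile it receives.\<close>

locale cyclic_design =
  fixes n t L :: nat
  assumes two_le_n: "2 \<le> n" and t_le_L: "t \<le> L" and L_pos: "0 < L"
begin

definition period :: nat where "period = t + L"

definition K :: nat where "K = (n - 1) * period + t"

definition offset :: "nat \<Rightarrow> nat \<Rightarrow> int" where
  "offset a G = (int G - int a) mod int K"

definition behind :: "int \<Rightarrow> nat \<Rightarrow> nat" where
  "behind z G = nat ((int G - z) mod int K)"

definition caches :: "nat \<Rightarrow> nat \<Rightarrow> bool" where
  "caches G f \<longleftrightarrow> offset f G < int t"

definition back_start :: "nat \<Rightarrow> nat" where
  "back_start r = r * period + t"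

definition in_front :: "nat \<Rightarrow> nat \<Rightarrow> bool" where
  "in_front a G \<longleftrightarrow> offset a G < int t"

definition in_back :: "nat \<Rightarrow> nat \<Rightarrow> nat \<Rightarrow> bool" where
  "in_back r a G \<longleftrightarrow> int (back_start r) \<le> offset a G \<and> offset a G < int (back_start r + L)"

definition served :: "nat \<Rightarrow> nat \<Rightarrow> nat \<Rightarrow> bool" where
  "served r a G \<longleftrightarrow> in_front a G \<or> in_back r a G"

definition lag :: "nat \<Rightarrow> nat \<Rightarrow> nat \<Rightarrow> int" where
  "lag r a G = (if in_front a G then offset a G + int K - int (back_start r) else offset a G)"

definition subfile :: "nat \<Rightarrow> nat \<Rightarrow> nat \<Rightarrow> nat" where
  "subfile r a G = behind (lag r a G) G"

lemma K_pos: "0 < K"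
  using L_pos two_le_n by (simp add: K_def period_def)

lemma back_start_bounds:
  assumes "r < n - 1"
  shows "t \<le> back_start r" and "back_start r + L + t \<le> K"
proof -
  have "Suc r * period \<le> (n - 1) * period"
    using assms by (intro mult_le_mono1) simp
  then show "back_start r + L + t \<le> K"
    by (simp add: back_start_def K_def period_def)
qed (simp add: back_start_def)

lemma offset_bounds: "0 \<le> offset a G" "offset a G < int K"
  using K_pos by (simp_all add: offset_def)

lemma behind_less: "behind z G < K"
  using K_pos by (simp add: behind_def nat_less_iff)

lemma offset_behind: "offset (behind z G) G = z mod int K"
  using K_pos by (simp add: offset_def behind_def mod_diff_right_eq)

lemma behind_offset: "f < K \<Longrightarrow> behind (offset f G) G = f"
  by (simp add: behind_def offset_def mod_diff_right_eq)

lemma offset_via: "offset f x = (offset a x - offset a u + offset f u) mod int K"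
proof -
  have "(int x - int f) - (offset a x - offset a u + offset f u)
      = ((int x - int a) - offset a x) - ((int u - int a) - offset a u)
        + ((int u - int f) - offset f u)"
    by simp
  then have "int K dvd (int x - int f) - (offset a x - offset a u + offset f u)"
    unfolding offset_def by (metis dvd_add dvd_diff dvd_minus_mod)
  then show ?thesis
    unfolding offset_def[of f x] by (simp add: mod_eq_dvd_iff)
qed

lemma lag_bounds:
  assumes "r < n - 1" and "served r a G"
  shows "int t \<le> lag r a G" "lag r a G < int K"
  using assms(2) back_start_bounds[OF assms(1)] offset_bounds[of a G]
  by (auto simp: lag_def served_def in_front_def in_back_def)

lemma offset_subfile:
  assumes "r < n - 1" and "served r a G"
  shows "offset (subfile r a G) G = lag r a G"
  using lag_bounds[OF assms] by (simp add: subfile_def offset_behind)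

lemma served_not_caches:
  assumes "r < n - 1" and "served r a G"
  shows "\<not> caches G (subfile r a G)"
  using lag_bounds[OF assms] offset_subfile[OF assms] by (simp add: caches_def)

lemma card_caches: "card {f. f < K \<and> caches G f} = t"
proof -
  have "t \<le> K"
    by (simp add: K_def)
  then have "card {f \<in> {..<K}. (int G - int f) mod int K \<in> {0..<int t}} = card {0..<int t}"
    by (intro card_preimage_bij_betw[OF bij_betw_mod_reflect[OF K_pos]]) auto
  moreover have "caches G f \<longleftrightarrow> (int G - int f) mod int K \<in> {0..<int t}" for f
    using offset_bounds[of f G] by (auto simp: caches_def offset_def)
  ultimately show ?thesis
    by simp
qed

definition interference_window :: "nat \<Rightarrow> nat \<Rightarrow> nat \<Rightarrow> int set" where
  "interference_window r a u = (let s = int (back_start r) in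
     if in_front a u then {0..<int t} \<union> {s + int t..<s + int L} else {s..<s + int L})"

lemma offset_in_interference_window:
  assumes "r < n - 1" and "served r a u" and "served r a G" and "\<not> caches G (subfile r a u)"
  shows "offset a G \<in> interference_window r a u"
proof -
  define s where "s = int (back_start r)"
  have "int t \<le> s" "s + int L + int t \<le> int K"
    using back_start_bounds[OF assms(1)] by (simp_all add: s_def)
  have shift: "offset (subfile r a u) G = (offset a G + (lag r a u - offset a u)) mod int K"
    using offset_via[of "subfile r a u" G a u] offset_subfile[OF assms(1,2)]
    by (simp add: algebra_simps)
  show ?thesis
  proof (cases "in_front a u")
    case True
    show ?thesis
    proof (cases "in_front a G")
      case False
      with assms(3) have G_back: "s \<le> offset a G" "offset a G < s + int L"
        by (auto simp: served_def in_back_def s_def)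
      then have "0 \<le> offset a G - s" "offset a G - s < int K"
        using \<open>int t \<le> s\<close> \<open>s + int L + int t \<le> int K\<close> by linarith+
      moreover have "offset (subfile r a u) G = (offset a G - s + int K) mod int K"
        using shift True by (simp add: lag_def s_def algebra_simps)
      ultimately have "offset (subfile r a u) G = offset a G - s"
        by simp
      then show ?thesis
        using assms(4) G_back True by (auto simp: interference_window_def Let_def caches_def s_def)
    qed (use True offset_bounds in \<open>auto simp: interference_window_def Let_def in_front_def\<close>)
  next
    case False
    then have "offset (subfile r a u) G = offset a G"
      using shift offset_bounds[of a G] by (simp add: lag_def)
    then show ?thesis
      using assms(3,4) False
      by (auto simp: interference_window_def Let_def caches_def served_def in_front_def in_back_def)
  qed
qed

lemma interference_window_subset: "r < n - 1 \<Longrightarrow> interference_window r a u \<subseteq> {0..<int K}"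
  using back_start_bounds[of r] by (auto simp: interference_window_def Let_def)

lemma card_interference_window: "r < n - 1 \<Longrightarrow> card (interference_window r a u) = L"
  using back_start_bounds[of r] t_le_L
  by (simp add: interference_window_def Let_def card_Un_disjoint nat_diff_distrib)

lemma card_interferers:
  assumes "r < n - 1" and "served r a u"
  shows "card {G \<in> {..<K}. served r a G \<and> \<not> caches G (subfile r a u)} \<le> L"
proof -
  have "card {G \<in> {..<K}. served r a G \<and> \<not> caches G (subfile r a u)}
      \<le> card {G \<in> {..<K}. offset a G \<in> interference_window r a u}"
    using offset_in_interference_window[OF assms] by (intro card_mono) auto
  also have "\<dots> = card (interference_window r a u)"
    using interference_window_subset[OF assms(1)] unfolding offset_def
    by (intro card_preimage_bij_betw[OF bij_betw_mod_shift[OF K_pos]])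
  finally show ?thesis
    using card_interference_window[OF assms(1)] by simp
qed

lemma lag_behind_in_back:
  assumes "int (back_start r) \<le> y" and "y < int (back_start r + L)" and "y < int K"
  shows "served r (behind y G) G" and "lag r (behind y G) G = y"
proof -
  have "int t \<le> int (back_start r)"
    by (simp add: back_start_def)
  with assms(1) have "int t \<le> y"
    by linarith
  moreover have "offset (behind y G) G = y"
    using assms(3) calculation by (simp add: offset_behind)
  ultimately show "served r (behind y G) G" "lag r (behind y G) G = y"
    using assms(1,2) by (simp_all add: served_def in_back_def in_front_def lag_def)
qed

lemma lag_behind_in_front:
  assumes "0 \<le> \<delta>" and "\<delta> < int t"
  shows "served r (behind \<delta> G) G" and "lag r (behind \<delta> G) G = \<delta> + int K - int (back_start r)"
proof -
  have "t \<le> K"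
    by (simp add: K_def)
  then have "offset (behind \<delta> G) G = \<delta>"
    using assms by (simp add: offset_behind)
  then show "served r (behind \<delta> G) G" "lag r (behind \<delta> G) G = \<delta> + int K - int (back_start r)"
    using assms(2) by (simp_all add: served_def in_front_def lag_def)
qed

text \<open>Every lag between \<open>t\<close> and \<open>K\<close> occurs: the back blocks of rounds \<open>r < n - 1\<close> realise the
  lags in \<open>[r (t + L) + t, (r + 1)(t + L))\<close> and the front blocks those in \<open>[m (t + L), m (t + L) + t)\<close>
  for \<open>1 \<le> m \<le> n - 1\<close>.\<close>

lemma exists_round_with_lag:
  assumes "int t \<le> y" and "y < int K"
  obtains r a where "r < n - 1" "a < K" "served r a G" "lag r a G = y"
proof -
  define z where "z = nat (y - int t)"
  define r0 where "r0 = z div period"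
  define \<rho> where "\<rho> = z mod period"
  have "z < (n - 1) * period"
    using assms two_le_n by (simp add: z_def K_def nat_less_iff of_nat_diff)
  then have "r0 < n - 1"
    by (simp add: r0_def less_mult_imp_div_less)
  have "\<rho> < period"
    using L_pos by (simp add: \<rho>_def period_def)
  have "int z = y - int t" "z = r0 * period + \<rho>"
    using assms(1) div_mult_mod_eq[of z period] by (simp_all add: z_def r0_def \<rho>_def)
  then have y: "y = int (back_start r0) + int \<rho>"
    by (simp add: back_start_def)
  show thesis
  proof (cases "\<rho> < L")
    case True
    then show thesis
      using lag_behind_in_back[of r0 y G] that[of r0 "behind y G"] \<open>r0 < n - 1\<close> y assms(2)
      by (simp add: behind_less)
  next
    case False
    define r where "r = n - 2 - r0"
    have "n - 1 = r + Suc r0"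
      using \<open>r0 < n - 1\<close> by (simp add: r_def)
    then have "int K - int (back_start r) = int (Suc r0 * period)"
      by (simp add: K_def back_start_def add_mult_distrib)
    moreover have "0 \<le> int \<rho> - int L" "int \<rho> - int L < int t"
      using False \<open>\<rho> < period\<close> by (auto simp: period_def)
    ultimately show thesis
      using lag_behind_in_front[of "int \<rho> - int L" r G] that[of r "behind (int \<rho> - int L) G"]
        \<open>n - 1 = r + Suc r0\<close> y
      by (simp add: behind_less back_start_def period_def algebra_simps)
  qed
qed

lemma exists_transmission_delivering:
  assumes "f < K" and "\<not> caches G f"
  obtains \<tau> where "\<tau> < (n - 1) * K" "served (\<tau> div K) (\<tau> mod K) G"
    "subfile (\<tau> div K) (\<tau> mod K) G = f"
proof -
  have "int t \<le> offset f G" "offset f G < int K"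
    using assms(2) offset_bounds[of f G] by (auto simp: caches_def)
  then obtain r a where r: "r < n - 1" and "a < K" "served r a G" "lag r a G = offset f G"
    by (rule exists_round_with_lag)
  moreover have "r * K + a < (n - 1) * K"
  proof -
    have "r * K + a < Suc r * K"
      using \<open>a < K\<close> by simp
    also have "\<dots> \<le> (n - 1) * K"
      using r by (intro mult_le_mono1) simp
    finally show ?thesis .
  qed
  ultimately show thesis
    using that[of "r * K + a"] assms(1) by (simp add: subfile_def behind_offset)
qed

definition placement :: "nat \<Rightarrow> ('k \<Rightarrow> nat \<times> nat) \<Rightarrow> 'k \<Rightarrow> (nat \<times> nat) set" where
  "placement N e u = {..<N} \<times> {f. f < K \<and> caches (fst (e u)) f}"

lemma uncoded_placement_cyclic:
  assumes "M * real K = real N * real t"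
  shows "uncoded_placement N K M (placement N e)"
  using assms unfolding uncoded_placement_def placement_def
  by (auto simp: card_cartesian_product card_caches)

lemma delivery_cyclic:
  fixes h :: "complex^'l::finite^'k::finite" and e :: "'k \<Rightarrow> nat \<times> nat"
  assumes "generic_channel h" and "\<forall>k. d k < N"
    and e: "bij_betw e UNIV ({..<K} \<times> {..<g})" and "L * g = CARD('l)"
  shows "\<exists>V. correct_delivery N K ((n - 1) * K) (placement N e) h d V"
proof -
  define srv where "srv \<tau> = {u. served (\<tau> div K) (\<tau> mod K) (fst (e u))}" for \<tau>
  define sub where "sub \<tau> u = subfile (\<tau> div K) (\<tau> mod K) (fst (e u))" for \<tau> u
  have round: "\<tau> div K < n - 1" if "\<tau> < (n - 1) * K" for \<tau>
    using that by (simp add: less_mult_imp_div_less)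
  have group: "fst (e u) < K" for u
    using bij_betw_apply[OF e UNIV_I] by (auto simp: mem_Times_iff)
  have "L \<le> K"
    using back_start_bounds(2)[of 0] two_le_n by simp
  then have "CARD('l) \<le> CARD('k)"
    using bij_betw_same_card[OF e] assms(4) mult_le_mono1[of L K g] by (simp add: card_cartesian_product)
  moreover have "(d u, sub \<tau> u) \<notin> placement N e u" if "\<tau> < (n - 1) * K" "u \<in> srv \<tau>" for \<tau> u
    using served_not_caches[OF round] that by (simp add: placement_def srv_def sub_def)
  moreover have "card {x \<in> srv \<tau>. (d u, sub \<tau> u) \<notin> placement N e x} \<le> CARD('l)"
    if "\<tau> < (n - 1) * K" "u \<in> srv \<tau>" for \<tau> u
  proof -
    define A where "A = {G \<in> {..<K}. served (\<tau> div K) (\<tau> mod K) G \<and> \<not> caches G (sub \<tau> u)}"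
    have "{x \<in> srv \<tau>. (d u, sub \<tau> u) \<notin> placement N e x} = {x. fst (e x) \<in> A}"
      using assms(2) group by (auto simp: A_def placement_def srv_def sub_def subfile_def behind_less)
    also have "card \<dots> = card A * g"
      by (subst card_preimage_fst_bij_betw[OF e]) (auto simp: A_def)
    also have "\<dots> \<le> L * g"
      using card_interferers[OF round] that by (simp add: A_def srv_def sub_def)
    finally show ?thesis
      using assms(4) by simp
  qed
  moreover have "\<exists>\<tau><(n - 1) * K. k \<in> srv \<tau> \<and> sub \<tau> k = f"
    if "f < K" "(d k, f) \<notin> placement N e k" for k f
    using that assms(2) exists_transmission_delivering[of f "fst (e k)"]
    by (simp add: placement_def srv_def sub_def) blast
  ultimately show ?thesis
    by (rule zero_forcing_delivery[OF assms(1) _ assms(2)])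
qed

end

section \<open>Reduction by the greatest common divisor\<close>

lemma delivery_time_eq:
  fixes K n t L :: nat
  assumes "K = n * t + (n - 1) * L" and "1 \<le> n" and "0 < t + L"
  shows "real (K - t) / real (t + L) = real n - 1"
proof -
  have "K - t = (n - 1) * (t + L)"
    using assms(1,2) by (cases n) (simp_all add: algebra_simps)
  moreover have "0 < real (t + L)"
    using assms(3) by (simp only: of_nat_0_less_iff)
  ultimately show ?thesis
    using assms(2) by (simp add: of_nat_diff field_simps)
qed

lemma cyclic_design_gcd_reduction:
  fixes K n t L g :: nat
  assumes "K = n * t + (n - 1) * L" and "2 \<le> n" and "t \<le> L" and "0 < L"
    and "g = gcd K (gcd t L)"
  shows "cyclic_design n (t div g) (L div g)"
    and "cyclic_design.K n (t div g) (L div g) = K div g"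
proof -
  have "0 < g"
    using assms(4,5) by simp
  obtain t' L' where t: "t = t' * g" and L: "L = L' * g"
    using assms(5) by (metis dvd_def gcd_dvd1 gcd_dvd2 dvd_trans mult.commute)
  show design: "cyclic_design n (t div g) (L div g)"
    using assms(2-4) \<open>0 < g\<close> by unfold_locales (simp_all add: t L)
  have "K = ((n - 1) * (t' + L') + t') * g"
    using assms(1,2) by (cases n) (simp_all add: t L algebra_simps)
  then show "cyclic_design.K n (t div g) (L div g) = K div g"
    using \<open>0 < g\<close> design by (simp add: t L cyclic_design.K_def cyclic_design.period_def)
qed

theorem theorem3:
  fixes N n t :: nat and M :: real
    and users :: "'k::finite itself" and antennas :: "'l::finite itself"
  assumes "N > 0" and "n \<ge> 2"
    and "CARD('k) = n * t + (n - 1) * CARD('l)"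
    and "CARD('l) \<ge> t"
    and "M / real N = real t / real CARD('k)"
  shows "real (CARD('k) - t) / real (t + CARD('l)) = real n - 1 \<and>
    (\<exists>F S (Z :: 'k \<Rightarrow> (nat \<times> nat) set).
       F = CARD('k) div gcd CARD('k) (gcd t CARD('l)) \<and>
       real S / real F = real (CARD('k) - t) / real (t + CARD('l)) \<and>
       uncoded_placement N F M Z \<and>
       (AE h in (lborel :: (complex^'l^'k) measure).
          \<forall>d :: 'k \<Rightarrow> nat. (\<forall>k. d k < N) \<longrightarrow>
            (\<exists>V :: nat \<Rightarrow> nat \<Rightarrow> nat \<Rightarrow> complex^'l. correct_delivery N F S Z h d V)))"
proof -
  define g where "g = gcd CARD('k) (gcd t CARD('l))"
  have g_dvd: "g dvd CARD('k)" "g dvd t" "g dvd CARD('l)"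
    by (simp_all add: g_def gcd_dvd1 dvd_trans[OF gcd_dvd2])
  note reduced = cyclic_design_gcd_reduction[OF assms(3,2,4) _ g_def]
  interpret cyclic_design n "t div g" "CARD('l) div g"
    using reduced(1) by simp
  have F_eq: "CARD('k) div gcd CARD('k) (gcd t CARD('l)) = K"
    using reduced(2) by (simp flip: g_def)
  have "card ({..<K} \<times> {..<g}) = CARD('k)"
    using g_dvd(1) by (simp add: F_eq[folded g_def, symmetric] card_cartesian_product)
  then obtain e :: "'k \<Rightarrow> nat \<times> nat" where e: "bij_betw e UNIV ({..<K} \<times> {..<g})"
    using finite_same_card_bij[of "UNIV :: 'k set" "{..<K} \<times> {..<g}"] by auto
  have "M * real K = real N * real (t div g)"
    using assms(1,5) g_dvd K_pos by (simp add: F_eq[folded g_def, symmetric] field_simps real_of_nat_div)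
  then have placement: "uncoded_placement N K M (placement N e)"
    by (rule uncoded_placement_cyclic)
  have "CARD('l) div g * g = CARD('l)"
    using g_dvd(3) by simp
  then have delivery: "AE h in (lborel :: (complex^'l^'k) measure).
      \<forall>d :: 'k \<Rightarrow> nat. (\<forall>k. d k < N) \<longrightarrow>
        (\<exists>V :: nat \<Rightarrow> nat \<Rightarrow> nat \<Rightarrow> complex^'l. correct_delivery N K ((n - 1) * K) (placement N e) h d V)"
    by (intro eventually_mono[OF AE_generic_channel]) (blast intro: delivery_cyclic[OF _ _ e])
  have time: "real (CARD('k) - t) / real (t + CARD('l)) = real n - 1"
    using assms(2,3) by (intro delivery_time_eq) simp_all
  have rate: "real ((n - 1) * K) / real K = real n - 1"
    using K_pos assms(2) by (simp add: of_nat_diff)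
  show ?thesis
    unfolding F_eq time using rate placement delivery by blast
qed

end
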